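(* Let $\chi\in\mathscr{C}^\infty_c(\mathbb{R}_+)$ and $\theta\in(0,\pi)$ be fixed. For $w\in\mathscr{C}^\infty_c(\mathbb{R}_+)$ let $$(\mathscr{A}^+_{\pi/2}-\mathscr{A}^+_\theta)(w)(t):=\int_0^\infty\big(\mathfrak{K}_{\pi/2}(t/s)-\mathfrak{K}_\theta(t/s)\big)w(s)(st)^{-1/4}\,ds,\qquad t>0,$$ where $\mathfrak{K}_\alpha(\tau):=\big(4\sin^2(\alpha)+(\sqrt\tau-1/\sqrt\tau)^2\big)^{-1/4}$. Then $$\sup_{u\in\mathscr{C}^\infty_0(\mathbb{R}_+)\setminus\{0\}}\frac{\|(\mathscr{A}^+_{\pi/2}-\mathscr{A}^+_\theta)(\chi u)\|_{\tilde{\mathrm{H}}^{1/2}(\mathbb{R}_+)}}{\|u\|_{\mathrm{L}^2(\mathbb{R}_+)}}<+\infty.$$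
   Context: $\mathbb{R}_+=[0,\infty)$. $\mathscr{C}^\infty_0(\mathbb{R}_+)$: smooth functions on $\mathbb{R}_+$ with bounded support contained in $(0,\infty)$; $\mathscr{C}^\infty_c(\mathbb{R}_+)$: restrictions to $\mathbb{R}_+$ of smooth compactly supported functions on $\mathbb{R}$. For a function $v$ on $\mathbb{R}_+$, $\|v\|^2_{\tilde{\mathrm{H}}^{1/2}(\mathbb{R}_+)}:=\|v\|^2_{\mathrm{L}^2(\mathbb{R}_+)}+\int_{\mathbb{R}_+\times\mathbb{R}_+}\frac{|v(x)-v(y)|^2}{|x-y|^2}\,dx\,dy+2\int_0^\infty|v(x)|^2\frac{dx}{x}$ (equivalently, the $\mathrm{H}^{1/2}(\mathbb{R})$ norm of the extension of $v$ by zero). *)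

theory Defs
  imports "HOL-Analysis.Analysis"
begin

definition smooth_fun :: "(real \<Rightarrow> real) \<Rightarrow> bool" where
  "smooth_fun f \<longleftrightarrow> (\<forall>k::nat. \<forall>x. ((deriv ^^ k) f) differentiable (at x))"

text \<open>C^infty_c(R_+): restrictions to [0,inf) of smooth compactly supported functions on R.\<close>
definition Cc_plus :: "(real \<Rightarrow> real) \<Rightarrow> bool" where
  "Cc_plus f \<longleftrightarrow> (\<exists>g. smooth_fun g \<and> bounded {x. g x \<noteq> 0} \<and> (\<forall>x\<ge>0. f x = g x))"

text \<open>C^infty_0(R_+): smooth functions whose support is bounded and contained in (0,inf),
  i.e. vanishing outside some [a,b] with a > 0 (represented as smooth functions on R).\<close>
definition C0_plus :: "(real \<Rightarrow> real) \<Rightarrow> bool" where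
  "C0_plus u \<longleftrightarrow> smooth_fun u \<and> (\<exists>a b. 0 < a \<and> (\<forall>x. x \<notin> {a..b} \<longrightarrow> u x = 0))"

definition frakK :: "real \<Rightarrow> real \<Rightarrow> real" where
  "frakK \<alpha> \<tau> = (4 * (sin \<alpha>)\<^sup>2 + (sqrt \<tau> - 1 / sqrt \<tau>)\<^sup>2) powr (-1/4)"

definition A_diff :: "real \<Rightarrow> (real \<Rightarrow> real) \<Rightarrow> real \<Rightarrow> real" where
  "A_diff \<theta> w t = (LINT s:{0<..}|lborel.
       (frakK (pi/2) (t/s) - frakK \<theta> (t/s)) * w s * (s * t) powr (-1/4))"

definition L2_sq :: "(real \<Rightarrow> real) \<Rightarrow> ennreal" where
  "L2_sq v = (\<integral>\<^sup>+ x. ennreal ((v x)\<^sup>2) * indicator {0<..} x \<partial>lborel)"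

definition Ht_half_sq :: "(real \<Rightarrow> real) \<Rightarrow> ennreal" where
  "Ht_half_sq v = L2_sq v
     + (\<integral>\<^sup>+ p. ennreal ((v (fst p) - v (snd p))\<^sup>2 / (fst p - snd p)\<^sup>2)
                 * indicator ({0<..} \<times> {0<..}) p \<partial>(lborel \<Otimes>\<^sub>M lborel))
     + 2 * (\<integral>\<^sup>+ x. ennreal ((v x)\<^sup>2 / x) * indicator {0<..} x \<partial>lborel)"

end

theory Submission
  imports Defs
begin

(*
  Put c = cos (2 theta). By frakK_weighted_eq_qform the operator has the kernel
  k(t, s) = (t^2 + 2ts + s^2)^(-1/4) - (t^2 - 2cts + s^2)^(-1/4), and as
  t^2 - 2cts + s^2 >= (1 - c)/2 max(t, s)^2, the mean value theorem (for x^(-1/4), then in t)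
  gives |k(t, s)| <= K E(t, s) and |k(t, s) - k(tau, s)| / (t - tau) <= K E(tau, s) / tau for
  tau < t, where E(t, s) = t s max(t, s)^(-5/2). So v = (A_{pi/2} - A_theta)(chi u) and its
  difference quotients are dominated by Phi(t) = int E(t, s) |chi u(s)| ds and by Phi(tau) / tau.
  Splitting the Gagliardo double integral at t = 2 tau bounds it, like the weighted term
  int v^2 / t, by int Phi^2 / t. Since E is homogeneous of degree -1/2, Schur's test with the
  weight t^(-1/2) bounds int Phi^2 / t by a multiple of ||chi u||^2, and, chi u being supported
  in (0, R], a second Schur test bounds int Phi^2 by a multiple of R ||chi u||^2.
*)

lemma powr_neg_diff_le:
  fixes x y a :: real
  assumes "0 < x" "x \<le> y" "0 < a"
  shows "x powr (-a) - y powr (-a) \<le> a * (y - x) * x powr (-a - 1)"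
proof (cases "x = y")
  case False
  then have xy: "x < y" using assms by simp
  have "DERIV (\<lambda>z. z powr (-a)) z :> -a * z powr (-a - 1)" if "x \<le> z" "z \<le> y" for z
    using DERIV_fun_powr[OF DERIV_ident, of z "-a"] that assms by simp
  from MVT2[OF xy this] obtain z where z: "x < z" "z < y"
    and eq: "y powr (-a) - x powr (-a) = (y - x) * (-a * z powr (-a - 1))"
    by blast
  have "z powr (-a - 1) \<le> x powr (-a - 1)"
    using z assms by (intro powr_mono2') auto
  then have "a * (y - x) * z powr (-a - 1) \<le> a * (y - x) * x powr (-a - 1)"
    using xy assms by (intro mult_left_mono) auto
  then show ?thesis
    using eq by (simp add: algebra_simps)
qed simp

lemma nn_integral_powr_from_0:
  assumes "-1 < a" "0 \<le> c"
  shows "(\<integral>\<^sup>+ x. ennreal (x powr a) * indicator {0..c} x \<partial>lborel)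
      = ennreal (c powr (a + 1) / (a + 1))"
  by (rule nn_integral_has_integral_lebesgue'[OF _ has_integral_powr_from_0[OF assms]]) simp

lemma nn_integral_powr_to_inf:
  assumes "e < -1" "0 < a"
  shows "(\<integral>\<^sup>+ x. ennreal (x powr e) * indicator {a..} x \<partial>lborel)
      = ennreal (-(a powr (e + 1)) / (e + 1))"
  by (rule nn_integral_has_integral_lebesgue'[OF _ has_integral_powr_to_inf[OF assms]]) simp

lemma ennreal_mult_eqI: "0 \<le> a \<Longrightarrow> 0 \<le> b \<Longrightarrow> a * b = c \<Longrightarrow> ennreal a * ennreal b = ennreal c"
  by (metis ennreal_mult)

lemma ennreal_sq_le: "ennreal \<bar>x\<bar> \<le> a \<Longrightarrow> ennreal (x\<^sup>2) \<le> a\<^sup>2"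
  by (metis abs_ge_zero ennreal_power power2_abs power_mono zero_le)

lemma ennreal_abs_set_integral_le:
  assumes "set_integrable lborel {0<..} f" and "\<And>s. 0 < s \<Longrightarrow> \<bar>f s\<bar> \<le> g s"
  shows "ennreal \<bar>LINT s:{0<..}|lborel. f s\<bar> \<le> (\<integral>\<^sup>+ s. ennreal (g s) * indicator {0<..} s \<partial>lborel)"
proof -
  have "ennreal \<bar>LINT s:{0<..}|lborel. f s\<bar> \<le> (\<integral>\<^sup>+ s. norm (indicator {0<..} s *\<^sub>R f s) \<partial>lborel)"
    using integral_norm_bound_ennreal[of lborel "\<lambda>s. indicator {0<..} s *\<^sub>R f s"] assms(1)
    by (simp add: set_lebesgue_integral_def set_integrable_def)
  also have "\<dots> \<le> (\<integral>\<^sup>+ s. ennreal (g s) * indicator {0<..} s \<partial>lborel)"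
    using assms(2) by (intro nn_integral_mono) (auto simp: indicator_def ennreal_leI)
  finally show ?thesis .
qed

lemma nn_integral_lborel_pair_swap:
  assumes [measurable]: "case_prod f \<in> borel_measurable (lborel \<Otimes>\<^sub>M lborel)"
  shows "(\<integral>\<^sup>+ p. f (snd p) (fst p) \<partial>(lborel \<Otimes>\<^sub>M lborel))
      = (\<integral>\<^sup>+ p. f (fst p) (snd p) \<partial>(lborel \<Otimes>\<^sub>M lborel))"
proof -
  have "(\<lambda>p. f (snd p) (fst p)) \<in> borel_measurable (lborel \<Otimes>\<^sub>M lborel)"
    using measurable_pair_swap[OF assms] by (simp add: case_prod_beta')
  then have "(\<integral>\<^sup>+ p. f (snd p) (fst p) \<partial>(lborel \<Otimes>\<^sub>M lborel))
      = (\<integral>\<^sup>+ x. \<integral>\<^sup>+ y. f y x \<partial>lborel \<partial>lborel)"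
    using lborel.nn_integral_fst[of "\<lambda>p. f (snd p) (fst p)" lborel] by simp
  also have "\<dots> = (\<integral>\<^sup>+ p. f (fst p) (snd p) \<partial>(lborel \<Otimes>\<^sub>M lborel))"
    using lborel_pair.nn_integral_snd[OF assms] by (simp add: case_prod_beta')
  finally show ?thesis .
qed

lemma smooth_fun_continuous: "smooth_fun f \<Longrightarrow> continuous_on UNIV f"
  unfolding smooth_fun_def
  by (metis continuous_at_imp_continuous_on differentiable_imp_continuous_within funpow_0)

lemma Cc_plusE:
  assumes "Cc_plus f"
  obtains g R M where "continuous_on UNIV g" "\<And>s. 0 \<le> s \<Longrightarrow> f s = g s"
    "0 < R" "\<And>s. R < s \<Longrightarrow> g s = 0" "\<And>s. \<bar>g s\<bar> \<le> M"
proof -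
  obtain g where g: "smooth_fun g" "bounded {x. g x \<noteq> 0}" "\<And>s. 0 \<le> s \<Longrightarrow> f s = g s"
    using assms unfolding Cc_plus_def by blast
  obtain R where R: "0 < R" and support: "\<And>x. g x \<noteq> 0 \<Longrightarrow> \<bar>x\<bar> \<le> R"
    using g(2) unfolding bounded_pos by auto
  have cont: "continuous_on UNIV g"
    using g(1) by (rule smooth_fun_continuous)
  then have "compact (g ` cball 0 R)"
    by (intro compact_continuous_image) (auto intro: continuous_on_subset)
  then obtain M where M: "\<And>x. x \<in> cball 0 R \<Longrightarrow> \<bar>g x\<bar> \<le> M"
    by (meson compact_imp_bounded bounded_real image_eqI)
  have "\<bar>g s\<bar> \<le> M" for s
    using M[of s] M[of 0] support[of s] R by (cases "g s = 0") auto
  moreover have "g s = 0" if "R < s" for s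
  proof (rule ccontr)
    assume "g s \<noteq> 0"
    then have "\<bar>s\<bar> \<le> R"
      by (rule support)
    with that abs_ge_self[of s] show False
      by linarith
  qed
  ultimately show ?thesis
    using that cont g(3) R by blast
qed

lemma L2_sq_mult_le:
  assumes [measurable]: "u \<in> borel_measurable borel" and g: "\<And>s. 0 < s \<Longrightarrow> \<bar>g s\<bar> \<le> M"
  shows "L2_sq (\<lambda>s. g s * u s) \<le> ennreal (M\<^sup>2) * L2_sq u"
proof -
  have "L2_sq (\<lambda>s. g s * u s)
      \<le> (\<integral>\<^sup>+ s. ennreal (M\<^sup>2) * (ennreal ((u s)\<^sup>2) * indicator {0<..} s) \<partial>lborel)"
    unfolding L2_sq_def
  proof (rule nn_integral_mono)
    fix s :: real
    show "ennreal ((g s * u s)\<^sup>2) * indicator {0<..} s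
        \<le> ennreal (M\<^sup>2) * (ennreal ((u s)\<^sup>2) * indicator {0<..} s)"
    proof (cases "0 < s")
      case True
      then have "(g s)\<^sup>2 \<le> M\<^sup>2"
        using g[OF True] by (metis abs_ge_zero power2_abs power_mono)
      then have "ennreal ((g s * u s)\<^sup>2) \<le> ennreal (M\<^sup>2 * (u s)\<^sup>2)"
        by (intro ennreal_leI) (simp add: power_mult_distrib mult_right_mono)
      then show ?thesis
        using True by (simp add: ennreal_mult)
    qed simp
  qed
  also have "\<dots> = ennreal (M\<^sup>2) * L2_sq u"
    unfolding L2_sq_def by (rule nn_integral_cmult) measurable
  finally show ?thesis .
qed

section \<open>The norms\<close>

definition gagliardo_seminorm_sq :: "(real \<Rightarrow> real) \<Rightarrow> ennreal" where
  "gagliardo_seminorm_sq v =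
     (\<integral>\<^sup>+ p. ennreal ((v (fst p) - v (snd p))\<^sup>2 / (fst p - snd p)\<^sup>2) * indicator ({0<..} \<times> {0<..}) p
        \<partial>(lborel \<Otimes>\<^sub>M lborel))"

definition hardy_integral :: "(real \<Rightarrow> ennreal) \<Rightarrow> ennreal" where
  "hardy_integral \<Phi> = (\<integral>\<^sup>+ t. ennreal (1 / t) * (\<Phi> t)\<^sup>2 * indicator {0<..} t \<partial>lborel)"

lemma Ht_half_sq_eq:
  "Ht_half_sq v = L2_sq v + gagliardo_seminorm_sq v + 2 * hardy_integral (\<lambda>t. ennreal \<bar>v t\<bar>)"
proof -
  have "ennreal ((v t)\<^sup>2 / t) * indicator {0<..} t
      = ennreal (1 / t) * (ennreal \<bar>v t\<bar>)\<^sup>2 * indicator {0<..} t" for t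
    by (cases "0 < t") (simp_all add: ennreal_power ennreal_mult'' divide_inverse mult.commute)
  then show ?thesis
    by (simp add: Ht_half_sq_def gagliardo_seminorm_sq_def hardy_integral_def)
qed

lemma Ht_half_sq_cong:
  assumes "\<And>t. 0 < t \<Longrightarrow> v t = w t"
  shows "Ht_half_sq v = Ht_half_sq w"
proof -
  have "L2_sq v = L2_sq w"
    unfolding L2_sq_def using assms by (intro nn_integral_cong) (simp add: indicator_def)
  moreover have "gagliardo_seminorm_sq v = gagliardo_seminorm_sq w"
    unfolding gagliardo_seminorm_sq_def using assms
    by (intro nn_integral_cong) (simp add: indicator_def mem_Times_iff)
  moreover have "hardy_integral (\<lambda>t. ennreal \<bar>v t\<bar>) = hardy_integral (\<lambda>t. ennreal \<bar>w t\<bar>)"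
    unfolding hardy_integral_def using assms by (intro nn_integral_cong) (simp add: indicator_def)
  ultimately show ?thesis
    by (simp add: Ht_half_sq_eq)
qed

lemma hardy_integral_le_mult:
  assumes [measurable]: "\<Psi> \<in> borel_measurable borel"
    and le: "\<And>t. 0 < t \<Longrightarrow> \<Phi> t \<le> ennreal C * \<Psi> t" and C: "0 \<le> C"
  shows "hardy_integral \<Phi> \<le> ennreal (C\<^sup>2) * hardy_integral \<Psi>"
proof -
  have "(\<Phi> t)\<^sup>2 \<le> ennreal (C\<^sup>2) * (\<Psi> t)\<^sup>2" if "0 < t" for t
    using power_mono[OF le[OF that], of 2] C by (simp add: power_mult_distrib ennreal_power)
  then have "hardy_integral \<Phi>
      \<le> (\<integral>\<^sup>+ t. ennreal (C\<^sup>2) * (ennreal (1 / t) * (\<Psi> t)\<^sup>2 * indicator {0<..} t) \<partial>lborel)"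
    unfolding hardy_integral_def
    by (intro nn_integral_mono) (auto simp: indicator_def mult.left_commute intro: mult_left_mono)
  also have "\<dots> = ennreal (C\<^sup>2) * hardy_integral \<Psi>"
    unfolding hardy_integral_def by (rule nn_integral_cmult) measurable
  finally show ?thesis .
qed

section \<open>The kernel\<close>

definition qform :: "real \<Rightarrow> real \<Rightarrow> real \<Rightarrow> real" where
  "qform c t s = t\<^sup>2 - 2 * c * t * s + s\<^sup>2"

(* the kernel of A^+_{pi/2} - A^+_theta for c = cos (2 theta), see A_diff_eq_kernel_op *)
definition diff_kernel :: "real \<Rightarrow> real \<Rightarrow> real \<Rightarrow> real" where
  "diff_kernel c t s = qform (-1) t s powr (-1/4) - qform c t s powr (-1/4)"

definition diff_kernel_dt :: "real \<Rightarrow> real \<Rightarrow> real \<Rightarrow> real" where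
  "diff_kernel_dt c t s =
     (1/2) * ((t - c * s) * qform c t s powr (-5/4) - (t + s) * qform (-1) t s powr (-5/4))"

definition majorant :: "real \<Rightarrow> real \<Rightarrow> real" where
  "majorant t s = t * s * max t s powr (-5/2)"

definition kernel_const :: "real \<Rightarrow> real" where
  "kernel_const c = ((1 - c) / 2) powr (-5/4) + 1 + 5 * ((1 - c) / 2) powr (-9/4)"

lemma qform_diff: "qform (-1) t s - qform c t s = 2 * (1 + c) * t * s"
  by (simp add: qform_def algebra_simps)

lemma qform_ge_max:
  assumes "-1 \<le> c" "c \<le> 1" "0 \<le> t" "0 \<le> s"
  shows "(1 - c) / 2 * (max t s)\<^sup>2 \<le> qform c t s"
proof -
  have "qform c t s = (1 + c) / 2 * (t - s)\<^sup>2 + (1 - c) / 2 * (t\<^sup>2 + s\<^sup>2) + (1 - c) * t * s"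
    by (simp add: qform_def power2_eq_square field_simps)
  moreover have "(max t s)\<^sup>2 \<le> t\<^sup>2 + s\<^sup>2"
    using assms by (simp add: max_def)
  then have "(1 - c) / 2 * (max t s)\<^sup>2 \<le> (1 - c) / 2 * (t\<^sup>2 + s\<^sup>2)"
    using assms by (intro mult_left_mono) auto
  moreover have "0 \<le> (1 + c) / 2 * (t - s)\<^sup>2" "0 \<le> (1 - c) * t * s"
    using assms by simp_all
  ultimately show ?thesis
    by linarith
qed

lemma qform_pos:
  assumes "-1 \<le> c" "c < 1" "0 < t" "0 < s"
  shows "0 < qform c t s"
proof -
  have "0 < (1 - c) / 2 * (max t s)\<^sup>2"
    using assms by simp
  then show ?thesis
    using qform_ge_max[of c t s] assms by linarith
qed

lemma qform_powr_le:
  assumes "-1 \<le> c" "c < 1" "0 < t" "0 < s" "0 < r"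
  shows "qform c t s powr (-r) \<le> ((1 - c) / 2) powr (-r) * max t s powr (-2 * r)"
proof -
  have pos: "0 < (1 - c) / 2 * (max t s)\<^sup>2"
    using assms by simp
  have "qform c t s powr (-r) \<le> ((1 - c) / 2 * (max t s)\<^sup>2) powr (-r)"
    using qform_ge_max[of c t s] pos assms by (intro powr_mono2') auto
  also have "\<dots> = ((1 - c) / 2) powr (-r) * ((max t s) powr 2) powr (-r)"
    using assms by (subst powr_mult) (auto simp: powr_numeral)
  also have "\<dots> = ((1 - c) / 2) powr (-r) * max t s powr (-2 * r)"
    by (simp add: powr_powr)
  finally show ?thesis .
qed

lemma qform_le_neg_one:
  assumes "-1 \<le> c" "0 \<le> t" "0 \<le> s"
  shows "qform c t s \<le> qform (-1) t s"
proof -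
  have "0 \<le> 2 * (1 + c) * t * s"
    using assms by simp
  then show ?thesis
    using qform_diff[of t s c] by linarith
qed

lemma qform_powr_diff_le:
  assumes c: "-1 \<le> c" "c < 1" and t: "0 < t" and s: "0 < s" and r: "0 < r"
  shows "qform c t s powr (-r) - qform (-1) t s powr (-r)
           \<le> 4 * r * (t * s) * (((1 - c) / 2) powr (-(r + 1)) * max t s powr (-2 * (r + 1)))"
proof -
  have "qform c t s powr (-r) - qform (-1) t s powr (-r)
      \<le> r * (2 * (1 + c) * t * s) * qform c t s powr (-(r + 1))"
    using powr_neg_diff_le[OF qform_pos[OF c t s] qform_le_neg_one r] c t s
    by (simp add: qform_diff)
  also have "\<dots> \<le> 4 * r * (t * s) * (((1 - c) / 2) powr (-(r + 1)) * max t s powr (-2 * (r + 1)))"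
  proof (rule mult_mono)
    have "(1 + c) * (r * (t * s)) \<le> 2 * (r * (t * s))"
      using c t s r by (intro mult_right_mono) auto
    then show "r * (2 * (1 + c) * t * s) \<le> 4 * r * (t * s)"
      by (simp add: algebra_simps)
  qed (use qform_powr_le[OF c t s, of "r + 1"] t s r in auto)
  finally show ?thesis .
qed

lemma frakK_weighted_eq_qform:
  assumes t: "0 < t" and s: "0 < s"
  shows "frakK \<alpha> (t / s) * (s * t) powr (-1/4) = qform (cos (2 * \<alpha>)) t s powr (-1/4)"
proof -
  have sq: "(sqrt (t / s) - 1 / sqrt (t / s))\<^sup>2 = t / s - 2 + s / t"
    using t s by (simp add: power2_eq_square field_simps real_sqrt_divide)
  have cos2: "cos (2 * \<alpha>) = 1 - 2 * (sin \<alpha>)\<^sup>2"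
    by (simp add: cos_double_sin)
  have eq: "4 * (sin \<alpha>)\<^sup>2 + (sqrt (t / s) - 1 / sqrt (t / s))\<^sup>2 = qform (cos (2 * \<alpha>)) t s / (s * t)"
    unfolding sq cos2 qform_def using t s by (simp add: field_simps power2_eq_square)
  have "0 \<le> (1 - cos (2 * \<alpha>)) / 2 * (max t s)\<^sup>2"
    by simp
  then have "0 \<le> qform (cos (2 * \<alpha>)) t s"
    using qform_ge_max[of "cos (2 * \<alpha>)" t s] t s cos_ge_minus_one cos_le_one
    by (meson less_imp_le order_trans)
  then have "(qform (cos (2 * \<alpha>)) t s / (s * t)) powr (-1/4) * (s * t) powr (-1/4)
      = qform (cos (2 * \<alpha>)) t s powr (-1/4)"
    using t s by (simp add: powr_mult[symmetric])
  then show ?thesis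
    by (simp add: frakK_def eq)
qed

lemma majorant_nonneg: "0 \<le> t \<Longrightarrow> 0 \<le> s \<Longrightarrow> 0 \<le> majorant t s"
  by (simp add: majorant_def)

lemma kernel_const_pos: "0 < kernel_const c"
  unfolding kernel_const_def using powr_ge_zero[of "(1 - c) / 2"] by (smt (verit))

lemma diff_kernel_le:
  assumes c: "-1 \<le> c" "c < 1" and t: "0 < t" and s: "0 < s"
  shows "\<bar>diff_kernel c t s\<bar> \<le> ((1 - c) / 2) powr (-5/4) * majorant t s"
proof -
  have "qform (-1) t s powr (-(1/4)) \<le> qform c t s powr (-(1/4))"
    using qform_le_neg_one qform_pos[OF c t s] c t s by (intro powr_mono2') auto
  then have "\<bar>diff_kernel c t s\<bar> = qform c t s powr (-(1/4)) - qform (-1) t s powr (-(1/4))"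
    by (simp add: diff_kernel_def)
  also have "\<dots> \<le> t * s * (((1 - c) / 2) powr (-5/4) * max t s powr (-5/2))"
    using qform_powr_diff_le[OF c t s, of "1/4"] by simp
  finally show ?thesis
    by (simp add: majorant_def mult_ac)
qed

lemma diff_kernel_le_const:
  assumes "-1 \<le> c" "c < 1" "0 < t" "0 < s"
  shows "\<bar>diff_kernel c t s\<bar> \<le> kernel_const c * majorant t s"
proof -
  have "((1 - c) / 2) powr (-5/4) \<le> kernel_const c"
    unfolding kernel_const_def using powr_ge_zero[of "(1 - c) / 2" "-9/4"] by linarith
  then show ?thesis
    using diff_kernel_le[OF assms] majorant_nonneg[of t s] assms
    by (meson mult_right_mono order.trans less_imp_le)
qed

lemma qform_powr_has_real_derivative:
  assumes "0 < qform c t s"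
  shows "((\<lambda>t. qform c t s powr (-1/4)) has_real_derivative
           -(1/2) * (t - c * s) * qform c t s powr (-5/4)) (at t)"
proof -
  have "((\<lambda>t. qform c t s) has_real_derivative 2 * t - 2 * c * s) (at t)"
    unfolding qform_def by (auto intro!: derivative_eq_intros)
  from DERIV_fun_powr[OF this assms, of "-1/4"] show ?thesis
    by (rule DERIV_cong) (simp add: field_simps)
qed

lemma diff_kernel_has_real_derivative:
  assumes "-1 \<le> c" "c < 1" "0 < t" "0 < s"
  shows "((\<lambda>t. diff_kernel c t s) has_real_derivative diff_kernel_dt c t s) (at t)"
proof -
  have "0 < qform (-1) t s" "0 < qform c t s"
    using qform_pos assms by auto
  from DERIV_diff[OF qform_powr_has_real_derivative[OF this(1)]
      qform_powr_has_real_derivative[OF this(2)]]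
  show ?thesis
    unfolding diff_kernel_def by (rule DERIV_cong) (simp add: diff_kernel_dt_def field_simps)
qed

lemma diff_kernel_dt_le:
  assumes c: "-1 \<le> c" "c < 1" and t: "0 < t" and s: "0 < s"
  shows "\<bar>diff_kernel_dt c t s\<bar> \<le> (1 + 5 * ((1 - c) / 2) powr (-9/4)) * s * max t s powr (-5/2)"
proof -
  define M where "M = max t s"
  define D where "D = ((1 - c) / 2) powr (-9/4)"
  define P where "P = qform c t s powr (-5/4)"
  define Q where "Q = qform (-1) t s powr (-5/4)"
  have M: "0 < M" "t \<le> M" "s \<le> M"
    using t s by (auto simp: M_def)
  have QP: "Q \<le> P"
    unfolding P_def Q_def using qform_le_neg_one qform_pos[OF c t s] c t s
    by (intro powr_mono2') auto
  have PQ: "P - Q \<le> 5 * (t * s) * (D * M powr (-9/2))"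
    using qform_powr_diff_le[OF c t s, of "5/4"] by (simp add: P_def Q_def D_def M_def)
  have "\<bar>c\<bar> * s \<le> 1 * s"
    using c s by (intro mult_right_mono) auto
  then have "\<bar>c * s\<bar> \<le> s"
    using s by (simp add: abs_mult)
  then have "\<bar>t - c * s\<bar> \<le> 2 * M"
    using abs_triangle_ineq4[of t "c * s"] M t by simp
  then have "\<bar>t - c * s\<bar> * (P - Q) \<le> 2 * M * (5 * (t * s) * (D * M powr (-9/2)))"
    using QP PQ by (intro mult_mono) auto
  also have "\<dots> = 10 * s * D * (t * (M * M powr (-9/2)))"
    by (simp add: algebra_simps)
  also have "\<dots> \<le> 10 * s * D * (M * (M * M powr (-9/2)))"
    using M s by (intro mult_left_mono mult_right_mono) (auto simp: D_def)
  also have "M * (M * M powr (-9/2)) = M powr (-5/2)"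
    using M by (simp add: powr_mult_base)
  finally have A: "\<bar>t - c * s\<bar> * (P - Q) \<le> 10 * s * D * M powr (-5/2)" .
  have "Q \<le> M powr (-5/2)"
    using qform_powr_le[of "-1" t s "5/4"] t s by (simp add: Q_def M_def)
  then have B: "(1 + c) * s * Q \<le> 2 * s * M powr (-5/2)"
    using c s by (intro mult_mono) (auto simp: Q_def)
  have "diff_kernel_dt c t s = 1/2 * ((t - c * s) * (P - Q) - (1 + c) * s * Q)"
    by (simp add: diff_kernel_dt_def P_def Q_def algebra_simps)
  then have "\<bar>diff_kernel_dt c t s\<bar> \<le> 1/2 * (\<bar>t - c * s\<bar> * (P - Q) + (1 + c) * s * Q)"
    using abs_triangle_ineq4[of "(t - c * s) * (P - Q)" "(1 + c) * s * Q"] QP c s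
    by (simp add: abs_mult Q_def)
  also have "\<dots> \<le> (1 + 5 * D) * s * M powr (-5/2)"
    using A B by (simp add: algebra_simps)
  finally show ?thesis
    by (simp add: D_def M_def)
qed

lemma diff_kernel_quotient_le:
  assumes c: "-1 \<le> c" "c < 1" and \<tau>: "0 < \<tau>" "\<tau> < t" and s: "0 < s"
  shows "\<bar>diff_kernel c t s - diff_kernel c \<tau> s\<bar> / (t - \<tau>) \<le> kernel_const c / \<tau> * majorant \<tau> s"
proof -
  have "((\<lambda>t. diff_kernel c t s) has_real_derivative diff_kernel_dt c x s) (at x)"
    if "\<tau> \<le> x" "x \<le> t" for x
    using diff_kernel_has_real_derivative c s \<tau> that by auto
  from MVT2[OF \<tau>(2) this] obtain z where z: "\<tau> < z" "z < t"
    and eq: "diff_kernel c t s - diff_kernel c \<tau> s = (t - \<tau>) * diff_kernel_dt c z s"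
    by blast
  have "\<bar>diff_kernel c t s - diff_kernel c \<tau> s\<bar> / (t - \<tau>) = \<bar>diff_kernel_dt c z s\<bar>"
    using eq \<tau> by (simp add: abs_mult)
  also have "\<dots> \<le> (1 + 5 * ((1 - c) / 2) powr (-9/4)) * s * max z s powr (-5/2)"
    using diff_kernel_dt_le[OF c _ s] z \<tau> by simp
  also have "\<dots> \<le> kernel_const c * s * max \<tau> s powr (-5/2)"
    using z \<tau> s by (intro mult_mono powr_mono2') (auto simp: kernel_const_def)
  also have "\<dots> = kernel_const c / \<tau> * majorant \<tau> s"
    using \<tau> by (simp add: majorant_def)
  finally show ?thesis .
qed

lemma isCont_diff_kernel:
  assumes "-1 \<le> c" "c < 1" "0 < t" "0 < s"
  shows "isCont (diff_kernel c t) s"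
  using qform_pos[OF assms] qform_pos[of "-1" t s] assms
  unfolding diff_kernel_def qform_def by (intro continuous_intros) auto

section \<open>Schur tests for the majorant\<close>

lemma majorant_commute: "majorant t s = majorant s t"
  by (simp add: majorant_def max.commute mult.commute)

lemma majorant_measurable[measurable (raw)]:
  assumes [measurable]: "f \<in> borel_measurable M" "g \<in> borel_measurable M"
  shows "(\<lambda>x. majorant (f x) (g x)) \<in> borel_measurable M"
  unfolding majorant_def by measurable

lemma majorant_below: "0 < s \<Longrightarrow> s \<le> t \<Longrightarrow> majorant t s = t powr (-3/2) * s"
  by (simp add: majorant_def max_def powr_mult_base mult.commute mult.left_commute)

lemma majorant_above: "0 < t \<Longrightarrow> t \<le> s \<Longrightarrow> majorant t s = t * s powr (-3/2)"
  by (simp add: majorant_def max_def mult.assoc powr_mult_base)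

lemma majorant_le_sqrt:
  assumes t: "0 < t" and s: "0 < s"
  shows "majorant t s \<le> s powr (-1/2)"
proof -
  define M where "M = max t s"
  have M: "0 < M" "t \<le> M" "s \<le> M"
    using t s by (auto simp: M_def)
  have "majorant t s = t * s * M powr (-5/2)"
    by (simp add: majorant_def M_def)
  also have "\<dots> \<le> M * M * M powr (-5/2)"
    using M t s by (intro mult_right_mono mult_mono) auto
  also have "\<dots> = M powr (-1/2)"
    using M by (simp add: mult.assoc powr_mult_base)
  also have "\<dots> \<le> s powr (-1/2)"
    using M s by (intro powr_mono2') auto
  finally show ?thesis .
qed

lemma majorant_powr_le_split:
  assumes t: "0 < t"
  shows "ennreal (majorant t s * s powr a) * indicator {0<..} s
           \<le> ennreal (t powr (-3/2)) * (ennreal (s powr (a + 1)) * indicator {0..t} s)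
             + ennreal t * (ennreal (s powr (a - 3/2)) * indicator {t..} s)"
proof -
  consider "s \<le> 0" | "0 < s" "s \<le> t" | "t \<le> s"
    by linarith
  then show ?thesis
  proof cases
    case 2
    then have "majorant t s * s powr a = t powr (-3/2) * s powr (a + 1)"
      by (simp add: majorant_below mult.assoc powr_mult_base add.commute)
    then show ?thesis
      using 2 by (simp add: ennreal_mult add_increasing2)
  next
    case 3
    then have "majorant t s * s powr a = t * s powr (a - 3/2)"
      using t by (simp add: majorant_above mult.assoc powr_add[symmetric])
    then show ?thesis
      using 3 t by (simp add: ennreal_mult add_increasing)
  qed simp
qed

lemma majorant_powr_integral_le:
  assumes t: "0 < t" and a: "-2 < a" "a < 1/2"
  shows "(\<integral>\<^sup>+ s. ennreal (majorant t s * s powr a) * indicator {0<..} s \<partial>lborel)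
           \<le> ennreal ((1 / (a + 2) + 1 / (1/2 - a)) * t powr (a + 1/2))"
proof -
  have "(\<integral>\<^sup>+ s. ennreal (majorant t s * s powr a) * indicator {0<..} s \<partial>lborel)
     \<le> (\<integral>\<^sup>+ s. ennreal (t powr (-3/2)) * (ennreal (s powr (a + 1)) * indicator {0..t} s)
              + ennreal t * (ennreal (s powr (a - 3/2)) * indicator {t..} s) \<partial>lborel)"
    using majorant_powr_le_split[OF t] by (rule nn_integral_mono)
  also have "\<dots> = ennreal (t powr (-3/2)) * ennreal (t powr (2 + a) / (2 + a))
                 + ennreal t * ennreal (t powr (a - 1/2) / (1/2 - a))"
  proof -
    have "-(t powr (a - 3/2 + 1)) / (a - 3/2 + 1) = t powr (a - 1/2) / (1/2 - a)"
      using a by (simp add: field_simps)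
    then show ?thesis
      using t a nn_integral_powr_to_inf[of "a - 3/2" t] nn_integral_powr_from_0[of "a + 1" t]
      by (simp add: nn_integral_add nn_integral_cmult)
  qed
  also have "\<dots>
      = ennreal (t powr (-3/2) * (t powr (2 + a) / (2 + a)) + t * (t powr (a - 1/2) / (1/2 - a)))"
  proof -
    define X Y where "X = t powr (2 + a) / (2 + a)" and "Y = t powr (a - 1/2) / (1/2 - a)"
    have "0 \<le> X" "0 \<le> Y"
      using a by (simp_all add: X_def Y_def)
    moreover have "0 \<le> t powr (-3/2) * X" "0 \<le> t * Y"
      using calculation t by simp_all
    ultimately show ?thesis
      unfolding X_def[symmetric] Y_def[symmetric] using t by (simp add: ennreal_mult ennreal_plus)
  qed
  also have "t powr (-3/2) * (t powr (2 + a) / (2 + a)) + t * (t powr (a - 1/2) / (1/2 - a))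
           = (1 / (a + 2) + 1 / (1/2 - a)) * t powr (a + 1/2)"
  proof -
    have "t powr (-3/2) * t powr (2 + a) = t powr (a + 1/2)"
      and "t * t powr (a - 1/2) = t powr (a + 1/2)"
      using t by (simp_all add: powr_add[symmetric] powr_mult_base add.commute)
    then show ?thesis
      by (simp only: times_divide_eq_right) (simp add: distrib_right add.commute)
  qed
  finally show ?thesis .
qed

lemma majorant_integral_le:
  assumes "0 < t"
  shows "(\<integral>\<^sup>+ s. ennreal (majorant t s) * indicator {0<..} s \<partial>lborel)
      \<le> ennreal (5/2 * t powr (1/2))"
proof -
  have "(\<integral>\<^sup>+ s. ennreal (majorant t s) * indicator {0<..} s \<partial>lborel)
      = (\<integral>\<^sup>+ s. ennreal (majorant t s * s powr 0) * indicator {0<..} s \<partial>lborel)"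
    by (intro nn_integral_cong) (simp add: indicator_def)
  also have "\<dots> \<le> ennreal (5/2 * t powr (1/2))"
    using majorant_powr_integral_le[OF assms, of 0] by simp
  finally show ?thesis .
qed

lemma majorant_weighted_integral_le:
  assumes "0 < s"
  shows "(\<integral>\<^sup>+ t. ennreal (majorant t s * t powr (-1/2)) * indicator {0<..} t \<partial>lborel)
      \<le> ennreal (5/3)"
  using majorant_powr_integral_le[OF assms, of "-1/2"] assms by (simp add: majorant_commute)

lemma majorant_integral_bounded_le:
  assumes "0 < t" "0 < R"
  shows "(\<integral>\<^sup>+ s. ennreal (majorant t s) * indicator {0<..R} s \<partial>lborel) \<le> ennreal (2 * R powr (1/2))"
proof -
  have "(\<integral>\<^sup>+ s. ennreal (majorant t s) * indicator {0<..R} s \<partial>lborel)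
      \<le> (\<integral>\<^sup>+ s. ennreal (s powr (-1/2)) * indicator {0..R} s \<partial>lborel)"
    using majorant_le_sqrt[OF assms(1)] by (intro nn_integral_mono) (auto simp: indicator_def)
  also have "\<dots> = ennreal (2 * R powr (1/2))"
    using assms by (simp add: nn_integral_powr_from_0)
  finally show ?thesis .
qed

definition majorant_op :: "(real \<Rightarrow> real) \<Rightarrow> real \<Rightarrow> ennreal" where
  "majorant_op W t = (\<integral>\<^sup>+ s. ennreal (majorant t s * \<bar>W s\<bar>) * indicator {0<..} s \<partial>lborel)"

lemma majorant_op_measurable[measurable]:
  assumes [measurable]: "W \<in> borel_measurable borel"
  shows "majorant_op W \<in> borel_measurable borel"
  unfolding majorant_op_def by measurable

lemma majorant_op_sq_le:
  assumes [measurable]: "W \<in> borel_measurable borel" "A \<in> sets borel"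
    and t: "0 < t" and W_A: "\<And>s. 0 < s \<Longrightarrow> W s \<noteq> 0 \<Longrightarrow> s \<in> A"
  shows "(majorant_op W t)\<^sup>2
           \<le> (\<integral>\<^sup>+ s. ennreal (majorant t s) * indicator (A \<inter> {0<..}) s \<partial>lborel)
             * (\<integral>\<^sup>+ s. ennreal (majorant t s * (W s)\<^sup>2) * indicator {0<..} s \<partial>lborel)"
proof -
  define f where "f s = ennreal (sqrt (majorant t s)) * indicator (A \<inter> {0<..}) s" for s
  define g where "g s = ennreal (sqrt (majorant t s) * \<bar>W s\<bar>) * indicator {0<..} s" for s
  have [measurable]: "A \<in> sets lborel"
    by simp
  have "f s * g s = ennreal (majorant t s * \<bar>W s\<bar>) * indicator {0<..} s" for s
    using majorant_nonneg[of t s] W_A[of s] t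
    by (cases "0 < s"; cases "s \<in> A")
       (auto simp: f_def g_def ennreal_mult[symmetric] mult.assoc[symmetric])
  then have op_eq: "majorant_op W t = (\<integral>\<^sup>+ s. f s * g s \<partial>lborel)"
    by (simp add: majorant_op_def)
  have f_sq: "(f s)\<^sup>2 = ennreal (majorant t s) * indicator (A \<inter> {0<..}) s" for s
    using majorant_nonneg[of t s] t
    by (auto simp: f_def indicator_def ennreal_power)
  have g_sq: "(g s)\<^sup>2 = ennreal (majorant t s * (W s)\<^sup>2) * indicator {0<..} s" for s
    using majorant_nonneg[of t s] t
    by (auto simp: g_def indicator_def ennreal_power power_mult_distrib)
  have "f \<in> borel_measurable lborel" "g \<in> borel_measurable lborel"
    unfolding f_def g_def by measurable
  from Cauchy_Schwarz_nn_integral[OF this] show ?thesis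
    by (simp only: op_eq f_sq g_sq)
qed

(* Schur's test with test function rho: Cauchy-Schwarz in s, then Tonelli *)
lemma majorant_op_weighted_sq_integral_le:
  fixes w \<rho> :: "real \<Rightarrow> ennreal"
  assumes [measurable]: "W \<in> borel_measurable borel" "\<rho> \<in> borel_measurable borel" "A \<in> sets borel"
    and W_A: "\<And>s. 0 < s \<Longrightarrow> W s \<noteq> 0 \<Longrightarrow> s \<in> A"
    and row: "\<And>t. 0 < t \<Longrightarrow>
      w t * (\<integral>\<^sup>+ s. ennreal (majorant t s) * indicator (A \<inter> {0<..}) s \<partial>lborel) \<le> \<alpha> * \<rho> t"
    and col: "\<And>s. 0 < s \<Longrightarrow> s \<in> A \<Longrightarrow>
      (\<integral>\<^sup>+ t. \<rho> t * ennreal (majorant t s) * indicator {0<..} t \<partial>lborel) \<le> \<beta>"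
  shows "(\<integral>\<^sup>+ t. w t * (majorant_op W t)\<^sup>2 * indicator {0<..} t \<partial>lborel) \<le> \<alpha> * \<beta> * L2_sq W"
proof -
  define F where "F t s = \<rho> t * ennreal (majorant t s) * indicator {0<..} t
                             * (ennreal ((W s)\<^sup>2) * indicator {0<..} s)" for t s
  have [measurable]: "case_prod F \<in> borel_measurable (lborel \<Otimes>\<^sub>M lborel)"
    unfolding F_def by measurable
  have pointwise: "w t * (majorant_op W t)\<^sup>2 * indicator {0<..} t
      \<le> \<alpha> * (\<integral>\<^sup>+ s. F t s \<partial>lborel)" for t
  proof (cases "0 < t")
    case t: True
    define J where "J = (\<integral>\<^sup>+ s. ennreal (majorant t s * (W s)\<^sup>2) * indicator {0<..} s \<partial>lborel)"
    have "w t * (majorant_op W t)\<^sup>2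
        \<le> w t * ((\<integral>\<^sup>+ s. ennreal (majorant t s) * indicator (A \<inter> {0<..}) s \<partial>lborel) * J)"
      unfolding J_def using majorant_op_sq_le[of W A t] W_A t by (intro mult_left_mono) auto
    also have "\<dots> \<le> \<alpha> * (\<rho> t * J)"
      using mult_right_mono[OF row[OF t], of J] by (simp add: mult.assoc)
    also have "\<rho> t * J
        = (\<integral>\<^sup>+ s. \<rho> t * (ennreal (majorant t s * (W s)\<^sup>2) * indicator {0<..} s) \<partial>lborel)"
      unfolding J_def by (rule nn_integral_cmult[symmetric]) measurable
    also have "\<dots> = (\<integral>\<^sup>+ s. F t s \<partial>lborel)"
      using t majorant_nonneg[of t]
      by (intro nn_integral_cong) (simp add: F_def ennreal_mult indicator_def mult_ac)
    finally show ?thesis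
      using t by simp
  qed simp
  have "(\<integral>\<^sup>+ t. w t * (majorant_op W t)\<^sup>2 * indicator {0<..} t \<partial>lborel)
      \<le> (\<integral>\<^sup>+ t. \<alpha> * (\<integral>\<^sup>+ s. F t s \<partial>lborel) \<partial>lborel)"
    by (intro nn_integral_mono pointwise)
  also have "\<dots> = \<alpha> * (\<integral>\<^sup>+ t. \<integral>\<^sup>+ s. F t s \<partial>lborel \<partial>lborel)"
    by (rule nn_integral_cmult) measurable
  also have "(\<integral>\<^sup>+ t. \<integral>\<^sup>+ s. F t s \<partial>lborel \<partial>lborel) = (\<integral>\<^sup>+ s. \<integral>\<^sup>+ t. F t s \<partial>lborel \<partial>lborel)"
    by (rule lborel_pair.Fubini'[symmetric]) simp
  also have "\<dots> \<le> (\<integral>\<^sup>+ s. \<beta> * (ennreal ((W s)\<^sup>2) * indicator {0<..} s) \<partial>lborel)"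
  proof (rule nn_integral_mono)
    fix s :: real
    have "(\<integral>\<^sup>+ t. F t s \<partial>lborel)
        = (\<integral>\<^sup>+ t. \<rho> t * ennreal (majorant t s) * indicator {0<..} t \<partial>lborel)
          * (ennreal ((W s)\<^sup>2) * indicator {0<..} s)"
      unfolding F_def by (rule nn_integral_multc) measurable
    also have "\<dots> \<le> \<beta> * (ennreal ((W s)\<^sup>2) * indicator {0<..} s)"
      using col[of s] W_A[of s] by (cases "0 < s \<and> W s \<noteq> 0") (auto intro: mult_right_mono)
    finally show "(\<integral>\<^sup>+ t. F t s \<partial>lborel) \<le> \<beta> * (ennreal ((W s)\<^sup>2) * indicator {0<..} s)" .
  qed
  also have "\<dots> = \<beta> * L2_sq W"
    unfolding L2_sq_def by (rule nn_integral_cmult) measurable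
  finally show ?thesis
    by (simp add: mult.assoc mult_left_mono)
qed

lemma majorant_op_hardy:
  assumes [measurable]: "W \<in> borel_measurable borel"
  shows "hardy_integral (majorant_op W) \<le> ennreal (25/6) * L2_sq W"
proof -
  have "(\<integral>\<^sup>+ t. ennreal (1 / t) * (majorant_op W t)\<^sup>2 * indicator {0<..} t \<partial>lborel)
      \<le> ennreal (5/2) * ennreal (5/3) * L2_sq W"
  proof (rule majorant_op_weighted_sq_integral_le
      [where A = UNIV and \<rho> = "\<lambda>t. ennreal (t powr (-1/2))"])
    fix t :: real
    assume t: "0 < t"
    have "ennreal (1 / t) * (\<integral>\<^sup>+ s. ennreal (majorant t s) * indicator {0<..} s \<partial>lborel)
        \<le> ennreal (1 / t) * ennreal (5/2 * t powr (1/2))"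
      using majorant_integral_le[OF t] by (rule mult_left_mono) simp
    also have "\<dots> = ennreal (5/2) * ennreal (t powr (-1/2))"
    proof -
      have "t * t powr (-1/2) = t powr (1/2)"
        using t by (simp add: powr_mult_base)
      then have eq: "1 / t * (5/2 * t powr (1/2)) = 5/2 * t powr (-1/2)"
        using t by (simp add: field_simps)
      have "ennreal (1 / t) * ennreal (5/2 * t powr (1/2)) = ennreal (1 / t * (5/2 * t powr (1/2)))"
        by (rule ennreal_mult[symmetric]) (use t in auto)
      also have "\<dots> = ennreal (5/2) * ennreal (t powr (-1/2))"
        unfolding eq by (rule ennreal_mult) auto
      finally show ?thesis .
    qed
    finally show "ennreal (1 / t)
        * (\<integral>\<^sup>+ s. ennreal (majorant t s) * indicator (UNIV \<inter> {0<..}) s \<partial>lborel)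
        \<le> ennreal (5/2) * ennreal (t powr (-1/2))"
      by simp
  next
    fix s :: real
    assume s: "0 < s"
    have "ennreal (t powr (-1/2)) * ennreal (majorant t s) * indicator {0<..} t
        = ennreal (majorant t s * t powr (-1/2)) * indicator {0<..} t" for t
      using majorant_nonneg[of t s] s by (simp add: ennreal_mult indicator_def mult.commute)
    then show "(\<integral>\<^sup>+ t. ennreal (t powr (-1/2)) * ennreal (majorant t s) * indicator {0<..} t
                  \<partial>lborel)
        \<le> ennreal (5/3)"
      using majorant_weighted_integral_le[OF s] by simp
  qed auto
  also have "ennreal (5/2) * ennreal (5/3) = ennreal (25/6)"
    using ennreal_mult[of "5/2" "5/3"] by simp
  finally show ?thesis
    unfolding hardy_integral_def .
qed

lemma majorant_op_L2:
  assumes [measurable]: "W \<in> borel_measurable borel"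
    and R: "0 < R" and W_R: "\<And>s. R < s \<Longrightarrow> W s = 0"
  shows "(\<integral>\<^sup>+ t. (majorant_op W t)\<^sup>2 * indicator {0<..} t \<partial>lborel) \<le> ennreal (5 * R) * L2_sq W"
proof -
  have "(\<integral>\<^sup>+ t. 1 * (majorant_op W t)\<^sup>2 * indicator {0<..} t \<partial>lborel)
      \<le> ennreal (2 * R powr (1/2)) * ennreal (5/2 * R powr (1/2)) * L2_sq W"
  proof (rule majorant_op_weighted_sq_integral_le[where A = "{..R}" and \<rho> = "\<lambda>_. 1"])
    fix t :: real
    assume "0 < t"
    then show "1 * (\<integral>\<^sup>+ s. ennreal (majorant t s) * indicator ({..R} \<inter> {0<..}) s \<partial>lborel)
        \<le> ennreal (2 * R powr (1/2)) * 1"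
      using majorant_integral_bounded_le[OF _ R, of t]
      by (simp add: Int_commute greaterThanAtMost_def)
  next
    fix s :: real
    assume s: "0 < s" "s \<in> {..R}"
    have "(\<integral>\<^sup>+ t. 1 * ennreal (majorant t s) * indicator {0<..} t \<partial>lborel)
        = (\<integral>\<^sup>+ t. ennreal (majorant s t) * indicator {0<..} t \<partial>lborel)"
      by (simp add: majorant_commute)
    also have "\<dots> \<le> ennreal (5/2 * s powr (1/2))"
      using majorant_integral_le[OF s(1)] .
    also have "\<dots> \<le> ennreal (5/2 * R powr (1/2))"
      using s by (intro ennreal_leI mult_left_mono powr_mono2) auto
    finally show "(\<integral>\<^sup>+ t. 1 * ennreal (majorant t s) * indicator {0<..} t \<partial>lborel)
        \<le> ennreal (5/2 * R powr (1/2))" .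
  qed (use W_R in \<open>auto simp: not_le[symmetric]\<close>)
  also have "ennreal (2 * R powr (1/2)) * ennreal (5/2 * R powr (1/2)) = ennreal (5 * R)"
  proof -
    have "2 * R powr (1/2) * (5/2 * R powr (1/2)) = 5 * R"
      using R by (simp add: powr_half_sqrt)
    then show ?thesis
      using ennreal_mult[of "2 * R powr (1/2)" "5/2 * R powr (1/2)"] by simp
  qed
  finally show ?thesis
    by simp
qed

section \<open>Difference quotients\<close>

(* Near the diagonal (tau < t < 2 tau) the difference quotient is bounded by the mean value bound,
   away from it by the bounds on v at both points. *)
definition diff_quotient_majorant :: "(real \<Rightarrow> ennreal) \<Rightarrow> real \<Rightarrow> real \<Rightarrow> ennreal" where
  "diff_quotient_majorant \<Phi> t \<tau> =
     (if 0 < \<tau> \<and> \<tau> < t \<and> t < 2 * \<tau> then ennreal (1 / \<tau>\<^sup>2) * (\<Phi> \<tau>)\<^sup>2 else 0)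
     + 8 * (if 0 < \<tau> \<and> 2 * \<tau> \<le> t then ennreal (1 / t\<^sup>2) * (\<Phi> t)\<^sup>2 else 0)
     + 8 * (if 0 < \<tau> \<and> 2 * \<tau> \<le> t then ennreal (1 / t\<^sup>2) * (\<Phi> \<tau>)\<^sup>2 else 0)"

lemma sq_diff_quotient_le_far:
  fixes x y t \<tau> :: real
  assumes \<tau>: "0 < \<tau>" "2 * \<tau> \<le> t"
  shows "(x - y)\<^sup>2 / (t - \<tau>)\<^sup>2 \<le> 8 * (1 / t\<^sup>2 * (x\<^sup>2 + y\<^sup>2))"
proof -
  have "(x - y)\<^sup>2 \<le> 2 * x\<^sup>2 + 2 * y\<^sup>2"
    using sum_squares_ge_zero[of "x + y" 0] by (simp add: power2_eq_square algebra_simps)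
  moreover have "(t / 2)\<^sup>2 \<le> (t - \<tau>)\<^sup>2"
    using \<tau> by (intro power_mono) auto
  then have "1 / (t - \<tau>)\<^sup>2 \<le> 4 * (1 / t\<^sup>2)"
    using divide_left_mono[of "(t / 2)\<^sup>2" "(t - \<tau>)\<^sup>2" 1] \<tau> by (simp add: power_divide)
  ultimately have "(x - y)\<^sup>2 / (t - \<tau>)\<^sup>2 \<le> (2 * x\<^sup>2 + 2 * y\<^sup>2) * (4 * (1 / t\<^sup>2))"
    by (simp add: divide_inverse mult_mono)
  then show ?thesis
    by (simp add: algebra_simps)
qed

lemma diff_quotient_sq_le:
  fixes v :: "real \<Rightarrow> real" and \<Phi> :: "real \<Rightarrow> ennreal"
  assumes C: "0 \<le> C"
    and bound: "\<And>t. 0 < t \<Longrightarrow> ennreal \<bar>v t\<bar> \<le> ennreal C * \<Phi> t"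
    and quotient: "\<And>t \<tau>. 0 < \<tau> \<Longrightarrow> \<tau> < t \<Longrightarrow> ennreal (\<bar>v t - v \<tau>\<bar> / (t - \<tau>)) \<le> ennreal (C / \<tau>) * \<Phi> \<tau>"
    and \<tau>: "0 < \<tau>" "\<tau> < t"
  shows "ennreal ((v t - v \<tau>)\<^sup>2 / (t - \<tau>)\<^sup>2) \<le> ennreal (C\<^sup>2) * diff_quotient_majorant \<Phi> t \<tau>"
proof (cases "t < 2 * \<tau>")
  case True
  have "ennreal ((v t - v \<tau>)\<^sup>2 / (t - \<tau>)\<^sup>2) = ennreal ((\<bar>v t - v \<tau>\<bar> / (t - \<tau>))\<^sup>2)"
    by (simp add: power_divide)
  also have "\<dots> \<le> (ennreal (C / \<tau>) * \<Phi> \<tau>)\<^sup>2"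
    using quotient[OF \<tau>] \<tau> by (intro ennreal_sq_le) simp
  also have "\<dots> = ennreal (C\<^sup>2) * (ennreal (1 / \<tau>\<^sup>2) * (\<Phi> \<tau>)\<^sup>2)"
  proof -
    have e: "ennreal (C\<^sup>2) * ennreal (1 / \<tau>\<^sup>2) = ennreal ((C / \<tau>)\<^sup>2)"
      using ennreal_mult'[of "C\<^sup>2" "1 / \<tau>\<^sup>2"] by (simp add: power_divide)
    show ?thesis
      using C \<tau>
      by (simp add: power_mult_distrib ennreal_power) (metis e mult.commute mult.left_commute)
  qed
  also have "\<dots> \<le> ennreal (C\<^sup>2) * diff_quotient_majorant \<Phi> t \<tau>"
    using True \<tau> by (intro mult_left_mono) (simp_all add: diff_quotient_majorant_def)
  finally show ?thesis .
next
  case False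
  then have "(v t - v \<tau>)\<^sup>2 / (t - \<tau>)\<^sup>2 \<le> 8 * (1 / t\<^sup>2 * ((v t)\<^sup>2 + (v \<tau>)\<^sup>2))"
    using \<tau> by (intro sq_diff_quotient_le_far) auto
  then have "ennreal ((v t - v \<tau>)\<^sup>2 / (t - \<tau>)\<^sup>2) \<le> ennreal (8 * (1 / t\<^sup>2 * ((v t)\<^sup>2 + (v \<tau>)\<^sup>2)))"
    by (rule ennreal_leI)
  also have "\<dots> = 8 * (ennreal (1 / t\<^sup>2) * ennreal ((v t)\<^sup>2 + (v \<tau>)\<^sup>2))"
    by (metis ennreal_mult' ennreal_numeral zero_le_numeral zero_le_divide_1_iff zero_le_power2)
  also have "\<dots> = 8 * (ennreal (1 / t\<^sup>2) * (ennreal ((v t)\<^sup>2) + ennreal ((v \<tau>)\<^sup>2)))"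
    by (metis ennreal_plus zero_le_power2)
  also have "\<dots> \<le> 8 * (ennreal (1 / t\<^sup>2) * ((ennreal C * \<Phi> t)\<^sup>2 + (ennreal C * \<Phi> \<tau>)\<^sup>2))"
    using bound[of t] bound[of \<tau>] \<tau> by (intro mult_left_mono add_mono ennreal_sq_le) auto
  also have "\<dots> = ennreal (C\<^sup>2) * (8 * (ennreal (1 / t\<^sup>2) * ((\<Phi> t)\<^sup>2 + (\<Phi> \<tau>)\<^sup>2)))"
    using C by (simp add: power_mult_distrib ennreal_power distrib_left mult_ac)
  also have "\<dots> \<le> ennreal (C\<^sup>2) * diff_quotient_majorant \<Phi> t \<tau>"
    using False \<tau> by (intro mult_left_mono) (simp_all add: diff_quotient_majorant_def distrib_left)
  finally show ?thesis .
qed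

lemma diff_quotient_sq_le_symmetric:
  fixes v :: "real \<Rightarrow> real" and \<Phi> :: "real \<Rightarrow> ennreal"
  assumes C: "0 \<le> C"
    and bound: "\<And>t. 0 < t \<Longrightarrow> ennreal \<bar>v t\<bar> \<le> ennreal C * \<Phi> t"
    and quotient: "\<And>t \<tau>. 0 < \<tau> \<Longrightarrow> \<tau> < t \<Longrightarrow>
      ennreal (\<bar>v t - v \<tau>\<bar> / (t - \<tau>)) \<le> ennreal (C / \<tau>) * \<Phi> \<tau>"
  shows "ennreal ((v t - v \<tau>)\<^sup>2 / (t - \<tau>)\<^sup>2) * indicator ({0<..} \<times> {0<..}) (t, \<tau>)
           \<le> ennreal (C\<^sup>2) * (diff_quotient_majorant \<Phi> t \<tau> + diff_quotient_majorant \<Phi> \<tau> t)"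
proof -
  define D where "D = diff_quotient_majorant \<Phi>"
  have dq: "ennreal ((v t - v \<tau>)\<^sup>2 / (t - \<tau>)\<^sup>2) \<le> ennreal (C\<^sup>2) * D t \<tau>" if "0 < \<tau>" "\<tau> < t" for t \<tau>
    unfolding D_def using diff_quotient_sq_le[OF C bound quotient that] .
  consider "t \<le> 0 \<or> \<tau> \<le> 0" | "0 < \<tau>" "\<tau> < t" | "0 < t" "t < \<tau>" | "t = \<tau>"
    by linarith
  then show ?thesis
  proof cases
    case 2
    have "ennreal (C\<^sup>2) * D t \<tau> \<le> ennreal (C\<^sup>2) * (D t \<tau> + D \<tau> t)"
      by (intro mult_left_mono) auto
    with dq[OF 2] 2 show ?thesis
      by (simp add: D_def order_trans)
  next
    case 3
    have "ennreal (C\<^sup>2) * D \<tau> t \<le> ennreal (C\<^sup>2) * (D t \<tau> + D \<tau> t)"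
      by (intro mult_left_mono) auto
    with dq[OF 3] 3 show ?thesis
      by (simp add: D_def power2_commute order_trans)
  qed auto
qed

lemma near_diagonal_integral:
  "(\<integral>\<^sup>+ \<tau>. \<integral>\<^sup>+ t. (if 0 < \<tau> \<and> \<tau> < t \<and> t < 2 * \<tau> then ennreal (1 / \<tau>\<^sup>2) * (\<Phi> \<tau>)\<^sup>2 else 0)
      \<partial>lborel \<partial>lborel) = hardy_integral \<Phi>"
  unfolding hardy_integral_def
proof (intro nn_integral_cong)
  fix \<tau> :: real
  show "(\<integral>\<^sup>+ t. (if 0 < \<tau> \<and> \<tau> < t \<and> t < 2 * \<tau> then ennreal (1 / \<tau>\<^sup>2) * (\<Phi> \<tau>)\<^sup>2 else 0) \<partial>lborel)
      = ennreal (1 / \<tau>) * (\<Phi> \<tau>)\<^sup>2 * indicator {0<..} \<tau>"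
  proof (cases "0 < \<tau>")
    case True
    have "(\<integral>\<^sup>+ t. (if 0 < \<tau> \<and> \<tau> < t \<and> t < 2 * \<tau> then ennreal (1 / \<tau>\<^sup>2) * (\<Phi> \<tau>)\<^sup>2 else 0) \<partial>lborel)
        = (\<integral>\<^sup>+ t. ennreal (1 / \<tau>\<^sup>2) * (\<Phi> \<tau>)\<^sup>2 * indicator {\<tau><..<2 * \<tau>} t \<partial>lborel)"
      using True by (intro nn_integral_cong) (simp add: indicator_def)
    also have "\<dots> = ennreal (1 / \<tau>\<^sup>2) * ennreal \<tau> * (\<Phi> \<tau>)\<^sup>2"
      using True by (subst nn_integral_cmult_indicator) (simp_all add: mult_ac)
    also have "ennreal (1 / \<tau>\<^sup>2) * ennreal \<tau> = ennreal (1 / \<tau>)"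
      using True ennreal_mult[of "1 / \<tau>\<^sup>2" \<tau>] by (simp add: power2_eq_square)
    finally show ?thesis
      using True by simp
  qed simp
qed

lemma far_diagonal_integral_fst:
  assumes [measurable]: "\<Phi> \<in> borel_measurable borel"
  shows "2 * (\<integral>\<^sup>+ t. \<integral>\<^sup>+ \<tau>. (if 0 < \<tau> \<and> 2 * \<tau> \<le> t then ennreal (1 / t\<^sup>2) * (\<Phi> t)\<^sup>2 else 0)
      \<partial>lborel \<partial>lborel) = hardy_integral \<Phi>"
proof -
  define F where "F t \<tau> = (if 0 < \<tau> \<and> 2 * \<tau> \<le> t then ennreal (1 / t\<^sup>2) * (\<Phi> t)\<^sup>2 else 0)" for t \<tau>
  have "2 * (\<integral>\<^sup>+ \<tau>. F t \<tau> \<partial>lborel) = ennreal (1 / t) * (\<Phi> t)\<^sup>2 * indicator {0<..} t" for t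
  proof (cases "0 < t")
    case True
    have "(\<integral>\<^sup>+ \<tau>. F t \<tau> \<partial>lborel)
        = (\<integral>\<^sup>+ \<tau>. ennreal (1 / t\<^sup>2) * (\<Phi> t)\<^sup>2 * indicator {0<..t/2} \<tau> \<partial>lborel)"
      by (intro nn_integral_cong) (auto simp: F_def indicator_def)
    also have "\<dots> = ennreal (1 / t\<^sup>2) * (\<Phi> t)\<^sup>2 * ennreal (t / 2)"
      using True by (subst nn_integral_cmult_indicator) simp_all
    finally have "2 * (\<integral>\<^sup>+ \<tau>. F t \<tau> \<partial>lborel)
        = ennreal 2 * (ennreal (1 / t\<^sup>2) * ennreal (t / 2)) * (\<Phi> t)\<^sup>2"
      by (simp add: mult_ac)
    also have "ennreal (1 / t\<^sup>2) * ennreal (t / 2) = ennreal (1 / (2 * t))"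
      using True by (intro ennreal_mult_eqI) (auto simp: power2_eq_square)
    also have "ennreal 2 * ennreal (1 / (2 * t)) = ennreal (1 / t)"
      using True by (intro ennreal_mult_eqI) auto
    finally show ?thesis
      using True by simp
  next
    case False
    then have "F t \<tau> = 0" for \<tau>
      by (simp add: F_def)
    then show ?thesis
      using False by simp
  qed
  note inner = this
  have [measurable]: "case_prod F \<in> borel_measurable (lborel \<Otimes>\<^sub>M lborel)"
    unfolding F_def by measurable
  have "2 * (\<integral>\<^sup>+ t. \<integral>\<^sup>+ \<tau>. F t \<tau> \<partial>lborel \<partial>lborel) = (\<integral>\<^sup>+ t. 2 * \<integral>\<^sup>+ \<tau>. F t \<tau> \<partial>lborel \<partial>lborel)"
    by (rule nn_integral_cmult[symmetric]) measurable
  also have "\<dots> = hardy_integral \<Phi>"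
    unfolding hardy_integral_def by (intro nn_integral_cong inner)
  finally show ?thesis
    by (simp add: F_def)
qed

lemma far_diagonal_integral_snd:
  assumes [measurable]: "\<Phi> \<in> borel_measurable borel"
  shows "2 * (\<integral>\<^sup>+ \<tau>. \<integral>\<^sup>+ t. (if 0 < \<tau> \<and> 2 * \<tau> \<le> t then ennreal (1 / t\<^sup>2) * (\<Phi> \<tau>)\<^sup>2 else 0)
      \<partial>lborel \<partial>lborel) = hardy_integral \<Phi>"
proof -
  define F where "F \<tau> t = (if 0 < \<tau> \<and> 2 * \<tau> \<le> t then ennreal (1 / t\<^sup>2) * (\<Phi> \<tau>)\<^sup>2 else 0)" for t \<tau>
  have "2 * (\<integral>\<^sup>+ t. F \<tau> t \<partial>lborel) = ennreal (1 / \<tau>) * (\<Phi> \<tau>)\<^sup>2 * indicator {0<..} \<tau>" for \<tau>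
  proof (cases "0 < \<tau>")
    case True
    have "(\<integral>\<^sup>+ t. F \<tau> t \<partial>lborel)
        = (\<integral>\<^sup>+ t. (\<Phi> \<tau>)\<^sup>2 * (ennreal (t powr (-2)) * indicator {2 * \<tau>..} t) \<partial>lborel)"
      using True
      by (intro nn_integral_cong) (auto simp: F_def indicator_def powr_minus divide_inverse
          powr_realpow mult.commute)
    also have "\<dots> = (\<Phi> \<tau>)\<^sup>2 * ennreal (1 / (2 * \<tau>))"
      using True nn_integral_powr_to_inf[of "-2" "2 * \<tau>"]
      by (simp add: nn_integral_cmult powr_minus_divide)
    finally have "2 * (\<integral>\<^sup>+ t. F \<tau> t \<partial>lborel) = ennreal 2 * ennreal (1 / (2 * \<tau>)) * (\<Phi> \<tau>)\<^sup>2"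
      by (simp add: mult_ac)
    also have "ennreal 2 * ennreal (1 / (2 * \<tau>)) = ennreal (1 / \<tau>)"
      using True by (intro ennreal_mult_eqI) auto
    finally show ?thesis
      using True by simp
  qed (simp add: F_def)
  note inner = this
  have [measurable]: "case_prod F \<in> borel_measurable (lborel \<Otimes>\<^sub>M lborel)"
    unfolding F_def by measurable
  have "2 * (\<integral>\<^sup>+ \<tau>. \<integral>\<^sup>+ t. F \<tau> t \<partial>lborel \<partial>lborel) = (\<integral>\<^sup>+ \<tau>. 2 * \<integral>\<^sup>+ t. F \<tau> t \<partial>lborel \<partial>lborel)"
    by (rule nn_integral_cmult[symmetric]) measurable
  also have "\<dots> = hardy_integral \<Phi>"
    unfolding hardy_integral_def by (intro nn_integral_cong inner)
  finally show ?thesis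
    by (simp add: F_def)
qed

lemma nn_integral_diff_quotient_majorant:
  assumes [measurable]: "\<Phi> \<in> borel_measurable borel"
  shows "(\<integral>\<^sup>+ p. diff_quotient_majorant \<Phi> (fst p) (snd p) \<partial>(lborel \<Otimes>\<^sub>M lborel))
      = 9 * hardy_integral \<Phi>"
proof -
  define N where "N t \<tau> = (if 0 < \<tau> \<and> \<tau> < t \<and> t < 2 * \<tau> then ennreal (1 / \<tau>\<^sup>2) * (\<Phi> \<tau>)\<^sup>2 else 0)"
    for t \<tau> :: real
  define F1 where "F1 t \<tau> = (if 0 < \<tau> \<and> 2 * \<tau> \<le> t then ennreal (1 / t\<^sup>2) * (\<Phi> t)\<^sup>2 else 0)"
    for t \<tau> :: real
  define F2 where "F2 t \<tau> = (if 0 < \<tau> \<and> 2 * \<tau> \<le> t then ennreal (1 / t\<^sup>2) * (\<Phi> \<tau>)\<^sup>2 else 0)"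
    for t \<tau> :: real
  have [measurable]: "case_prod N \<in> borel_measurable (lborel \<Otimes>\<^sub>M lborel)"
    "case_prod F1 \<in> borel_measurable (lborel \<Otimes>\<^sub>M lborel)"
    "case_prod F2 \<in> borel_measurable (lborel \<Otimes>\<^sub>M lborel)"
    unfolding N_def F1_def F2_def by measurable
  have "(\<integral>\<^sup>+ p. diff_quotient_majorant \<Phi> (fst p) (snd p) \<partial>(lborel \<Otimes>\<^sub>M lborel))
      = (\<integral>\<^sup>+ p. case_prod N p \<partial>(lborel \<Otimes>\<^sub>M lborel))
        + 8 * (\<integral>\<^sup>+ p. case_prod F1 p \<partial>(lborel \<Otimes>\<^sub>M lborel))
        + 8 * (\<integral>\<^sup>+ p. case_prod F2 p \<partial>(lborel \<Otimes>\<^sub>M lborel))"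
    unfolding diff_quotient_majorant_def N_def[symmetric] F1_def[symmetric] F2_def[symmetric]
    by (simp add: nn_integral_add nn_integral_cmult case_prod_beta')
  also have "(\<integral>\<^sup>+ p. case_prod N p \<partial>(lborel \<Otimes>\<^sub>M lborel)) = hardy_integral \<Phi>"
    using lborel_pair.nn_integral_snd[of "case_prod N"] near_diagonal_integral[of \<Phi>]
    by (simp add: N_def)
  also have "8 * (\<integral>\<^sup>+ p. case_prod F1 p \<partial>(lborel \<Otimes>\<^sub>M lborel)) = 4 * hardy_integral \<Phi>"
  proof -
    have "2 * (\<integral>\<^sup>+ p. case_prod F1 p \<partial>(lborel \<Otimes>\<^sub>M lborel)) = hardy_integral \<Phi>"
      using lborel.nn_integral_fst[of "case_prod F1" lborel] far_diagonal_integral_fst[of \<Phi>]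
      by (simp add: F1_def)
    moreover have "(8::ennreal) * (\<integral>\<^sup>+ p. case_prod F1 p \<partial>(lborel \<Otimes>\<^sub>M lborel))
        = 4 * (2 * (\<integral>\<^sup>+ p. case_prod F1 p \<partial>(lborel \<Otimes>\<^sub>M lborel)))"
      by (simp add: mult.assoc[symmetric])
    ultimately show ?thesis
      by simp
  qed
  also have "8 * (\<integral>\<^sup>+ p. case_prod F2 p \<partial>(lborel \<Otimes>\<^sub>M lborel)) = 4 * hardy_integral \<Phi>"
  proof -
    have "2 * (\<integral>\<^sup>+ p. case_prod F2 p \<partial>(lborel \<Otimes>\<^sub>M lborel)) = hardy_integral \<Phi>"
      using lborel_pair.nn_integral_snd[of "case_prod F2"] far_diagonal_integral_snd[of \<Phi>]
      by (simp add: F2_def)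
    moreover have "(8::ennreal) * (\<integral>\<^sup>+ p. case_prod F2 p \<partial>(lborel \<Otimes>\<^sub>M lborel))
        = 4 * (2 * (\<integral>\<^sup>+ p. case_prod F2 p \<partial>(lborel \<Otimes>\<^sub>M lborel)))"
      by (simp add: mult.assoc[symmetric])
    ultimately show ?thesis
      by simp
  qed
  also have "hardy_integral \<Phi> + 4 * hardy_integral \<Phi> + 4 * hardy_integral \<Phi>
      = (1 + 4 + 4) * hardy_integral \<Phi>"
    by (simp only: distrib_right mult_1)
  finally show ?thesis
    by simp
qed

lemma gagliardo_le_hardy:
  fixes v :: "real \<Rightarrow> real" and \<Phi> :: "real \<Rightarrow> ennreal"
  assumes [measurable]: "\<Phi> \<in> borel_measurable borel" and C: "0 \<le> C"
    and bound: "\<And>t. 0 < t \<Longrightarrow> ennreal \<bar>v t\<bar> \<le> ennreal C * \<Phi> t"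
    and quotient: "\<And>t \<tau>. 0 < \<tau> \<Longrightarrow> \<tau> < t \<Longrightarrow> ennreal (\<bar>v t - v \<tau>\<bar> / (t - \<tau>)) \<le> ennreal (C / \<tau>) * \<Phi> \<tau>"
  shows "gagliardo_seminorm_sq v \<le> ennreal (18 * C\<^sup>2) * hardy_integral \<Phi>"
proof -
  define D where "D = diff_quotient_majorant \<Phi>"
  have [measurable]: "case_prod D \<in> borel_measurable (lborel \<Otimes>\<^sub>M lborel)"
    unfolding D_def diff_quotient_majorant_def by measurable
  have "ennreal ((v t - v \<tau>)\<^sup>2 / (t - \<tau>)\<^sup>2) * indicator ({0<..} \<times> {0<..}) (t, \<tau>)
      \<le> ennreal (C\<^sup>2) * (D t \<tau> + D \<tau> t)" for t \<tau>
    unfolding D_def by (rule diff_quotient_sq_le_symmetric[OF C bound quotient])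
  then have "gagliardo_seminorm_sq v
      \<le> (\<integral>\<^sup>+ p. ennreal (C\<^sup>2) * (D (fst p) (snd p) + D (snd p) (fst p)) \<partial>(lborel \<Otimes>\<^sub>M lborel))"
    unfolding gagliardo_seminorm_sq_def by (intro nn_integral_mono) (metis prod.collapse)
  also have "\<dots> = ennreal (C\<^sup>2) * ((\<integral>\<^sup>+ p. D (fst p) (snd p) \<partial>(lborel \<Otimes>\<^sub>M lborel))
                                  + (\<integral>\<^sup>+ p. D (snd p) (fst p) \<partial>(lborel \<Otimes>\<^sub>M lborel)))"
    using measurable_pair_swap[of "case_prod D"]
    by (simp add: nn_integral_cmult nn_integral_add case_prod_beta')
  also have "(\<integral>\<^sup>+ p. D (snd p) (fst p) \<partial>(lborel \<Otimes>\<^sub>M lborel))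
      = (\<integral>\<^sup>+ p. D (fst p) (snd p) \<partial>(lborel \<Otimes>\<^sub>M lborel))"
    by (rule nn_integral_lborel_pair_swap) measurable
  also have "(\<integral>\<^sup>+ p. D (fst p) (snd p) \<partial>(lborel \<Otimes>\<^sub>M lborel)) = 9 * hardy_integral \<Phi>"
    unfolding D_def by (rule nn_integral_diff_quotient_majorant) measurable
  also have "9 * hardy_integral \<Phi> + 9 * hardy_integral \<Phi> = 18 * hardy_integral \<Phi>"
    using distrib_right[of 9 9 "hardy_integral \<Phi>"] by simp
  also have "ennreal (C\<^sup>2) * (18 * hardy_integral \<Phi>) = ennreal (18 * C\<^sup>2) * hardy_integral \<Phi>"
    by (simp add: ennreal_mult' mult_ac)
  finally show ?thesis .
qed

lemma Ht_half_sq_le_majorant: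
  fixes v :: "real \<Rightarrow> real" and \<Phi> :: "real \<Rightarrow> ennreal"
  assumes [measurable]: "\<Phi> \<in> borel_measurable borel" and C: "0 \<le> C"
    and bound: "\<And>t. 0 < t \<Longrightarrow> ennreal \<bar>v t\<bar> \<le> ennreal C * \<Phi> t"
    and quotient: "\<And>t \<tau>. 0 < \<tau> \<Longrightarrow> \<tau> < t \<Longrightarrow>
      ennreal (\<bar>v t - v \<tau>\<bar> / (t - \<tau>)) \<le> ennreal (C / \<tau>) * \<Phi> \<tau>"
  shows "Ht_half_sq v
           \<le> ennreal (C\<^sup>2) * ((\<integral>\<^sup>+ t. (\<Phi> t)\<^sup>2 * indicator {0<..} t \<partial>lborel)
               + 20 * hardy_integral \<Phi>)"
proof -
  define L where "L = (\<integral>\<^sup>+ t. (\<Phi> t)\<^sup>2 * indicator {0<..} t \<partial>lborel)"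
  define H where "H = hardy_integral \<Phi>"
  have "ennreal ((v t)\<^sup>2) \<le> ennreal (C\<^sup>2) * (\<Phi> t)\<^sup>2" if "0 < t" for t
    using ennreal_sq_le[OF bound[OF that]] C by (simp add: power_mult_distrib ennreal_power)
  then have "L2_sq v \<le> (\<integral>\<^sup>+ t. ennreal (C\<^sup>2) * ((\<Phi> t)\<^sup>2 * indicator {0<..} t) \<partial>lborel)"
    unfolding L2_sq_def by (intro nn_integral_mono) (simp add: indicator_def)
  also have "\<dots> = ennreal (C\<^sup>2) * L"
    unfolding L_def by (rule nn_integral_cmult) measurable
  finally have "Ht_half_sq v \<le> ennreal (C\<^sup>2) * L + ennreal (18 * C\<^sup>2) * H + 2 * (ennreal (C\<^sup>2) * H)"
    unfolding Ht_half_sq_eq H_def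
    using gagliardo_le_hardy[OF _ C bound quotient] hardy_integral_le_mult[OF _ bound C]
    by (intro add_mono mult_left_mono) auto
  also have "\<dots> = ennreal (C\<^sup>2) * (L + 20 * H)"
  proof -
    have "(20::ennreal) * H = 18 * H + 2 * H"
      using distrib_right[of 18 2 H] by simp
    then show ?thesis
      by (simp add: ennreal_mult' distrib_left mult_ac)
  qed
  finally show ?thesis
    by (simp add: L_def H_def)
qed

section \<open>The operator\<close>

definition kernel_op :: "real \<Rightarrow> (real \<Rightarrow> real) \<Rightarrow> real \<Rightarrow> real" where
  "kernel_op c W t = (LINT s:{0<..}|lborel. diff_kernel c t s * W s)"

lemma A_diff_eq_kernel_op:
  assumes t: "0 < t"
  shows "A_diff \<theta> W t = kernel_op (cos (2 * \<theta>)) W t"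
proof -
  have "(frakK (pi/2) (t/s) - frakK \<theta> (t/s)) * W s * (s * t) powr (-1/4)
      = diff_kernel (cos (2 * \<theta>)) t s * W s" if s: "0 < s" for s
  proof -
    have "frakK (pi/2) (t/s) * (s * t) powr (-1/4) = qform (-1) t s powr (-1/4)"
      using frakK_weighted_eq_qform[OF t s, of "pi/2"] by simp
    moreover have "frakK \<theta> (t/s) * (s * t) powr (-1/4) = qform (cos (2 * \<theta>)) t s powr (-1/4)"
      by (rule frakK_weighted_eq_qform[OF t s])
    moreover have "(frakK (pi/2) (t/s) - frakK \<theta> (t/s)) * W s * (s * t) powr (-1/4)
        = (frakK (pi/2) (t/s) * (s * t) powr (-1/4) - frakK \<theta> (t/s) * (s * t) powr (-1/4)) * W s"
      by (simp add: algebra_simps)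
    ultimately show ?thesis
      by (simp add: diff_kernel_def)
  qed
  then show ?thesis
    unfolding A_diff_def kernel_op_def by (intro set_lebesgue_integral_cong) auto
qed

lemma set_integrable_diff_kernel:
  assumes c: "-1 \<le> c" "c < 1" and t: "0 < t" and W: "continuous_on UNIV W"
    and a: "0 < a" and W_ab: "\<And>s. s \<notin> {a..b} \<Longrightarrow> W s = 0"
  shows "set_integrable lborel {0<..} (\<lambda>s. diff_kernel c t s * W s)"
proof -
  have "integrable lborel (\<lambda>s. (diff_kernel c t s * W s) * indicator {a..b} s)"
  proof (rule borel_integrable_atLeastAtMost)
    fix s
    assume "a \<le> s" "s \<le> b"
    then show "isCont (\<lambda>s. diff_kernel c t s * W s) s"
      using isCont_diff_kernel[OF c t] W a
      by (intro continuous_intros) (auto simp: continuous_on_eq_continuous_at)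
  qed
  moreover have "(\<lambda>s. (diff_kernel c t s * W s) * indicator {a..b} s)
      = (\<lambda>s. indicator {0<..} s *\<^sub>R (diff_kernel c t s * W s))"
    using W_ab a by (auto simp: indicator_def fun_eq_iff)
  ultimately show ?thesis
    unfolding set_integrable_def by simp
qed

lemma kernel_op_le:
  assumes c: "-1 \<le> c" "c < 1" and t: "0 < t" and W: "continuous_on UNIV W"
    and a: "0 < a" and W_ab: "\<And>s. s \<notin> {a..b} \<Longrightarrow> W s = 0"
  shows "ennreal \<bar>kernel_op c W t\<bar> \<le> ennreal (kernel_const c) * majorant_op W t"
proof -
  have [measurable]: "W \<in> borel_measurable borel"
    using W by (rule borel_measurable_continuous_onI)
  have "ennreal \<bar>kernel_op c W t\<bar>
      \<le> (\<integral>\<^sup>+ s. ennreal (kernel_const c * (majorant t s * \<bar>W s\<bar>)) * indicator {0<..} s \<partial>lborel)"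
    unfolding kernel_op_def
  proof (rule ennreal_abs_set_integral_le[OF set_integrable_diff_kernel[OF c t W a W_ab]])
    fix s :: real
    assume "0 < s"
    then show "\<bar>diff_kernel c t s * W s\<bar> \<le> kernel_const c * (majorant t s * \<bar>W s\<bar>)"
      using diff_kernel_le_const[OF c t]
      by (simp add: abs_mult mult.assoc[symmetric] mult_right_mono)
  qed
  also have "\<dots>
      = (\<integral>\<^sup>+ s. ennreal (kernel_const c)
          * (ennreal (majorant t s * \<bar>W s\<bar>) * indicator {0<..} s) \<partial>lborel)"
    using kernel_const_pos[of c] majorant_nonneg[of t] t
    by (intro nn_integral_cong) (simp add: ennreal_mult indicator_def)
  also have "\<dots> = ennreal (kernel_const c) * majorant_op W t"
    unfolding majorant_op_def by (rule nn_integral_cmult) measurable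
  finally show ?thesis .
qed

lemma kernel_op_quotient_le:
  assumes c: "-1 \<le> c" "c < 1" and \<tau>: "0 < \<tau>" "\<tau> < t" and W: "continuous_on UNIV W"
    and a: "0 < a" and W_ab: "\<And>s. s \<notin> {a..b} \<Longrightarrow> W s = 0"
  shows "ennreal (\<bar>kernel_op c W t - kernel_op c W \<tau>\<bar> / (t - \<tau>))
           \<le> ennreal (kernel_const c / \<tau>) * majorant_op W \<tau>"
proof -
  define K where "K = kernel_const c / \<tau>"
  have K: "0 \<le> K"
    using kernel_const_pos[of c] \<tau> by (simp add: K_def)
  have [measurable]: "W \<in> borel_measurable borel"
    using W by (rule borel_measurable_continuous_onI)
  have int_t: "set_integrable lborel {0<..} (\<lambda>s. diff_kernel c t s * W s)"
    and int_\<tau>: "set_integrable lborel {0<..} (\<lambda>s. diff_kernel c \<tau> s * W s)"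
    using set_integrable_diff_kernel[OF c _ W a W_ab] \<tau> by auto
  have "\<bar>kernel_op c W t - kernel_op c W \<tau>\<bar> / (t - \<tau>)
      = \<bar>LINT s:{0<..}|lborel. (diff_kernel c t s * W s - diff_kernel c \<tau> s * W s) / (t - \<tau>)\<bar>"
    using \<tau> by (simp add: kernel_op_def set_integral_diff(2)[OF int_t int_\<tau>])
  also have "ennreal \<dots>
      \<le> (\<integral>\<^sup>+ s. ennreal (K * (majorant \<tau> s * \<bar>W s\<bar>)) * indicator {0<..} s \<partial>lborel)"
  proof (rule ennreal_abs_set_integral_le)
    show "set_integrable lborel {0<..} (\<lambda>s. (diff_kernel c t s * W s - diff_kernel c \<tau> s * W s) / (t
        - \<tau>))"
      using int_t int_\<tau> by auto
    fix s :: real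
    assume "0 < s"
    then have "\<bar>diff_kernel c t s - diff_kernel c \<tau> s\<bar> / (t - \<tau>) * \<bar>W s\<bar>
        \<le> K * majorant \<tau> s * \<bar>W s\<bar>"
      using diff_kernel_quotient_le[OF c \<tau>] by (intro mult_right_mono) (auto simp: K_def)
    moreover have "\<bar>(diff_kernel c t s * W s - diff_kernel c \<tau> s * W s) / (t - \<tau>)\<bar>
        = \<bar>diff_kernel c t s - diff_kernel c \<tau> s\<bar> / (t - \<tau>) * \<bar>W s\<bar>"
      using \<tau> by (simp add: left_diff_distrib[symmetric] abs_mult)
    ultimately show "\<bar>(diff_kernel c t s * W s - diff_kernel c \<tau> s * W s) / (t - \<tau>)\<bar>
        \<le> K * (majorant \<tau> s * \<bar>W s\<bar>)"
      by (simp add: mult.assoc)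
  qed
  also have "\<dots> = (\<integral>\<^sup>+ s. ennreal K * (ennreal (majorant \<tau> s * \<bar>W s\<bar>) * indicator {0<..} s) \<partial>lborel)"
    using K majorant_nonneg[of \<tau>] \<tau>
    by (intro nn_integral_cong) (simp add: ennreal_mult indicator_def)
  also have "\<dots> = ennreal K * majorant_op W \<tau>"
    unfolding majorant_op_def by (rule nn_integral_cmult) measurable
  finally show ?thesis
    by (simp add: K_def)
qed

lemma Ht_half_sq_kernel_op_le:
  assumes c: "-1 \<le> c" "c < 1" and W: "continuous_on UNIV W"
    and a: "0 < a" and R: "0 < R" and W_aR: "\<And>s. s \<notin> {a..R} \<Longrightarrow> W s = 0"
  shows "Ht_half_sq (kernel_op c W) \<le> ennreal ((kernel_const c)\<^sup>2 * (5 * R + 250/3)) * L2_sq W"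
proof -
  have [measurable]: "W \<in> borel_measurable borel"
    using W by (rule borel_measurable_continuous_onI)
  have "Ht_half_sq (kernel_op c W)
      \<le> ennreal ((kernel_const c)\<^sup>2)
          * ((\<integral>\<^sup>+ t. (majorant_op W t)\<^sup>2 * indicator {0<..} t \<partial>lborel)
              + 20 * hardy_integral (majorant_op W))"
    using kernel_op_le[OF c _ W a W_aR] kernel_op_quotient_le[OF c _ _ W a W_aR] kernel_const_pos[of
        c]
    by (intro Ht_half_sq_le_majorant) auto
  also have "\<dots>
      \<le> ennreal ((kernel_const c)\<^sup>2) * (ennreal (5 * R) * L2_sq W
          + 20 * (ennreal (25/6) * L2_sq W))"
    using majorant_op_L2[of W R] majorant_op_hardy[of W] W_aR R
    by (intro mult_left_mono add_mono) auto
  also have "\<dots> = ennreal ((kernel_const c)\<^sup>2 * (5 * R + 250/3)) * L2_sq W"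
  proof -
    have "20 * (ennreal (25/6) * L2_sq W) = ennreal (250/3) * L2_sq W"
      using ennreal_mult_eqI[of 20 "25/6" "250/3"] by (simp add: mult.assoc[symmetric])
    moreover have "ennreal (5 * R) * L2_sq W + ennreal (250/3) * L2_sq W
        = ennreal (5 * R + 250/3) * L2_sq W"
      using R by (simp add: distrib_right)
    ultimately show ?thesis
      using R by (simp add: ennreal_mult mult.assoc)
  qed
  finally show ?thesis .
qed

lemma cos_double_lt_one: "0 < \<theta> \<Longrightarrow> \<theta> < pi \<Longrightarrow> cos (2 * \<theta>) < 1"
  using sin_gt_zero[of \<theta>] by (simp add: cos_double_sin)

lemma Ht_half_sq_A_diff_le:
  assumes g: "continuous_on UNIV g" "\<And>s. 0 \<le> s \<Longrightarrow> chi s = g s"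
    and R: "0 < R" "\<And>s. R < s \<Longrightarrow> g s = 0" and M: "\<And>s. \<bar>g s\<bar> \<le> M"
    and \<theta>: "0 < \<theta>" "\<theta> < pi" and u: "C0_plus u"
  shows "Ht_half_sq (A_diff \<theta> (\<lambda>s. chi s * u s))
           \<le> ennreal ((kernel_const (cos (2 * \<theta>)))\<^sup>2 * (5 * R + 250/3) * M\<^sup>2) * L2_sq u"
proof -
  define c where "c = cos (2 * \<theta>)"
  have c: "-1 \<le> c" "c < 1"
    using cos_double_lt_one[OF \<theta>] by (simp_all add: c_def)
  define K where "K = (kernel_const c)\<^sup>2 * (5 * R + 250/3)"
  have K: "0 \<le> K"
    using R(1) by (simp add: K_def)
  obtain a b where a: "0 < a" and u_ab: "\<And>s. s \<notin> {a..b} \<Longrightarrow> u s = 0" and "smooth_fun u"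
    using u unfolding C0_plus_def by blast
  then have u_cont: "continuous_on UNIV u"
    by (simp add: smooth_fun_continuous)
  \<comment> \<open>chi is only known on [0, inf), but u vanishes below a > 0\<close>
  have W: "(\<lambda>s. chi s * u s) = (\<lambda>s. g s * u s)"
  proof
    fix s
    show "chi s * u s = g s * u s"
      using g(2)[of s] u_ab[of s] a by (cases "s < a") auto
  qed
  have "Ht_half_sq (A_diff \<theta> (\<lambda>s. chi s * u s)) = Ht_half_sq (kernel_op c (\<lambda>s. g s * u s))"
    unfolding W c_def by (intro Ht_half_sq_cong A_diff_eq_kernel_op)
  also have "\<dots> \<le> ennreal K * L2_sq (\<lambda>s. g s * u s)"
    unfolding K_def using c g(1) u_cont a R u_ab
    by (intro Ht_half_sq_kernel_op_le) (auto intro: continuous_intros simp: not_le)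
  also have "\<dots> \<le> ennreal K * (ennreal (M\<^sup>2) * L2_sq u)"
    using M u_cont by (intro mult_left_mono L2_sq_mult_le borel_measurable_continuous_onI) auto
  also have "\<dots> = ennreal (K * M\<^sup>2) * L2_sq u"
    using K by (simp add: ennreal_mult mult.assoc)
  finally show ?thesis
    by (simp add: K_def c_def)
qed

theorem lemma10:
  fixes chi :: "real \<Rightarrow> real" and \<theta> :: real
  assumes "Cc_plus chi" and "0 < \<theta>" and "\<theta> < pi"
  shows "\<exists>C::real. \<forall>u. C0_plus u \<and> u \<noteq> (\<lambda>_. 0) \<longrightarrow>
           Ht_half_sq (A_diff \<theta> (\<lambda>s. chi s * u s)) \<le> ennreal C * L2_sq u"
proof -
  obtain g R M where "continuous_on UNIV g" "\<And>s. 0 \<le> s \<Longrightarrow> chi s = g s"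
    and "0 < R" "\<And>s. R < s \<Longrightarrow> g s = 0" and "\<And>s. \<bar>g s\<bar> \<le> M"
    using Cc_plusE[OF assms(1)] by blast
  from Ht_half_sq_A_diff_le[OF this assms(2,3)] show ?thesis
    by blast
qed

end
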